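(* Let $q$ be a prime power and $v,r\ge 1$ integers. If the generalized cylinder conjecture is true for $(v+1,r+1,q)$, then it is true for $(v,r,q)$.
   Context: $\mathrm{PG}(v-1,q)$ is the projective space of $\mathbb{F}_q^v$; a $k$-space is a $k$-dimensional subspace of $\mathbb{F}_q^v$ (points are $1$-spaces, hyperplanes $(v-1)$-spaces). A set $\mathcal{S}$ of points is spanning if its points span $\mathbb{F}_q^v$, and it is $q^r$-divisible if $|\mathcal{S}\cap H|\equiv|\mathcal{S}|\pmod{q^r}$ for every hyperplane $H$. An $(r+1)$-cylinder is a multiset of $q^{r+1}$ points which arises as the union (counted with multiplicity) of the point sets $L_1\setminus F,\dots,L_q\setminus F$, where $L_1,\dots,L_q$ are $(r+1)$-spaces and $F$ is an $r$-space contained in every $L_i$ ($L_i\setminus F$ denotes the set of points of $L_i$ not in $F$). The generalized cylinder conjecture is said to be true for the triple $(v,r,q)$ if every $q^r$-divisible spanning set of $q^{r+1}$ points in $\mathrm{PG}(v-1,q)$ is an $(r+1)$-cylinder. *)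

theory Defs
  imports Main "HOL-Library.Multiset"
begin

text \<open>Vectors of F^v are modelled as functions nat => F vanishing outside {..<v}.\<close>

definition vecs :: "nat \<Rightarrow> (nat \<Rightarrow> 'a::field) set" where
  "vecs v = {x. \<forall>i\<ge>v. x i = 0}"

definition lincomb :: "((nat \<Rightarrow> 'a::field) \<Rightarrow> 'a) \<Rightarrow> (nat \<Rightarrow> 'a) set \<Rightarrow> (nat \<Rightarrow> 'a)" where
  "lincomb c B = (\<lambda>i. \<Sum>x\<in>B. c x * x i)"

definition lspan :: "(nat \<Rightarrow> 'a::field) set \<Rightarrow> (nat \<Rightarrow> 'a) set" where
  "lspan A = {y. \<exists>B c. finite B \<and> B \<subseteq> A \<and> y = lincomb c B}"

definition lin_indep :: "(nat \<Rightarrow> 'a::field) set \<Rightarrow> bool" where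
  "lin_indep B \<longleftrightarrow> (\<forall>c. lincomb c B = (\<lambda>i. 0) \<longrightarrow> (\<forall>x\<in>B. c x = 0))"

definition kspace :: "nat \<Rightarrow> nat \<Rightarrow> (nat \<Rightarrow> 'a::field) set \<Rightarrow> bool" where
  "kspace v k U \<longleftrightarrow> (\<exists>B. finite B \<and> card B = k \<and> B \<subseteq> vecs v \<and> lin_indep B \<and> U = lspan B)"

definition points :: "nat \<Rightarrow> (nat \<Rightarrow> 'a::field) set set" where
  "points v = {P. kspace v 1 P}"

definition spanning :: "nat \<Rightarrow> (nat \<Rightarrow> 'a::field) set set \<Rightarrow> bool" where
  "spanning v S \<longleftrightarrow> lspan (\<Union>S) = vecs v"

definition divisible :: "nat \<Rightarrow> nat \<Rightarrow> (nat \<Rightarrow> 'a::{field,finite}) set set \<Rightarrow> bool" where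
  "divisible v r S \<longleftrightarrow> (\<forall>H. kspace v (v - 1) H \<longrightarrow>
      card {P\<in>S. P \<subseteq> H} mod (card (UNIV :: 'a set) ^ r) = card S mod (card (UNIV :: 'a set) ^ r))"

text \<open>(r+1)-cylinder: a multiset of points.\<close>
definition cylinder :: "nat \<Rightarrow> nat \<Rightarrow> (nat \<Rightarrow> 'a::{field,finite}) set multiset \<Rightarrow> bool" where
  "cylinder v r M \<longleftrightarrow> size M = card (UNIV :: 'a set) ^ (r + 1) \<and>
     (\<exists>F L. kspace v r F \<and> (\<forall>i<card (UNIV :: 'a set). kspace v (r + 1) (L i) \<and> F \<subseteq> L i) \<and>
        M = (\<Sum>i<card (UNIV :: 'a set). mset_set {P\<in>points v. P \<subseteq> L i \<and> \<not> P \<subseteq> F}))"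

definition gcc :: "'a::{field,finite} itself \<Rightarrow> nat \<Rightarrow> nat \<Rightarrow> bool" where
  "gcc _ v r \<longleftrightarrow> (\<forall>S :: (nat \<Rightarrow> 'a) set set.
     S \<subseteq> points v \<and> finite S \<and> card S = card (UNIV :: 'a set) ^ (r + 1) \<and> spanning v S \<and> divisible v r S
     \<longrightarrow> cylinder v r (mset_set S))"

end

theory Submission
  imports Defs "HOL-Library.Function_Algebras" "HOL.Vector_Spaces"
begin

text \<open>
  Adjoin a new coordinate and replace every point \<open>\<langle>x\<rangle>\<close> of \<open>S\<close> by the \<open>q\<close> points
  \<open>\<langle>x + \<lambda>e\<^sub>v\<rangle>\<close>, \<open>\<lambda> \<in> F\<^sub>q\<close>.  The resulting set \<open>S'\<close> of \<open>q\<^sup>r\<^sup>+\<^sup>2\<close> points of \<open>PG(v,q)\<close>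
  spans and is \<open>q\<^sup>r\<^sup>+\<^sup>1\<close>-divisible: a hyperplane through \<open>e\<^sub>v\<close> meets \<open>S'\<close> in \<open>q\<close> times
  a hyperplane section of \<open>S\<close>, any other hyperplane in exactly one point above each
  point of \<open>S\<close>.  By hypothesis \<open>S'\<close> is then an \<open>(r+2)\<close>-cylinder, with axis \<open>F'\<close> say.  Choose a hyperplane
  \<open>H\<close> which is the graph of a linear functional on \<open>F\<^sub>q\<^sup>v\<close> and does not contain \<open>F'\<close>;
  then \<open>S' \<inter> H\<close> projects bijectively onto \<open>S\<close>, and intersecting the cylinder with
  \<open>H\<close> and projecting exhibits \<open>S\<close> as an \<open>(r+1)\<close>-cylinder with axis the projection of
  \<open>F' \<inter> H\<close>.
\<close>

section \<open>Subspaces of \<open>F\<^sup>n\<close> as a library vector space\<close>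

definition vscale :: "'a::field \<Rightarrow> (nat \<Rightarrow> 'a) \<Rightarrow> (nat \<Rightarrow> 'a)" where
  "vscale c x = (\<lambda>i. c * x i)"

interpretation V: vector_space "vscale :: 'a::field \<Rightarrow> _"
  by unfold_locales (auto simp: vscale_def fun_eq_iff algebra_simps)

lemma sum_fun_apply: "(\<Sum>x\<in>B. f x) i = (\<Sum>x\<in>B. f x i)"
  by (induction B rule: infinite_finite_induct) auto

lemma lincomb_eq_sum: "lincomb c B = (\<Sum>x\<in>B. vscale (c x) x)"
  by (simp add: lincomb_def fun_eq_iff sum_fun_apply vscale_def)

lemma lspan_eq_span: "lspan A = V.span A"
  unfolding lspan_def V.span_explicit lincomb_eq_sum by blast

lemma lin_indep_iff_independent: "finite B \<Longrightarrow> lin_indep B \<longleftrightarrow> V.independent B"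
  unfolding lin_indep_def V.dependent_finite lincomb_eq_sum zero_fun_def[symmetric] by blast

lemma kspace_iff:
  "kspace n k U \<longleftrightarrow>
    (\<exists>B. finite B \<and> card B = k \<and> B \<subseteq> vecs n \<and> V.independent B \<and> U = V.span B)"
  unfolding kspace_def lspan_eq_span using lin_indep_iff_independent by blast

lemma subspace_vecs: "V.subspace (vecs n)"
  by (auto simp: V.subspace_def vecs_def vscale_def)

lemma kspace_imp_subspace: "kspace n k U \<Longrightarrow> V.subspace U \<and> U \<subseteq> vecs n"
  unfolding kspace_iff using V.span_minimal[OF _ subspace_vecs] by blast

lemma kspace_vecs_mono: "kspace n k U \<Longrightarrow> U \<subseteq> vecs m \<Longrightarrow> kspace m k U"
  unfolding kspace_iff using V.span_superset by blast

lemma span_singleton_subset_iff: "V.subspace U \<Longrightarrow> V.span {y} \<subseteq> U \<longleftrightarrow> y \<in> U"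
  using V.span_base[of y "{y}"] V.span_minimal[of "{y}" U] by blast

lemma module_hom_vscale_intro:
  assumes "\<And>x y. f (x + y) = f x + f y" and "\<And>c x. f (vscale c x) = vscale c (f x)"
  shows "module_hom (vscale :: 'a::field \<Rightarrow> _) (vscale :: 'a \<Rightarrow> _) f"
  using assms by (auto simp: module_hom_def module_hom_axioms_def V.module_axioms)

definition unit_vec :: "nat \<Rightarrow> nat \<Rightarrow> 'a::field" where
  "unit_vec i = (\<lambda>j. if j = i then 1 else 0)"

lemma inj_unit_vec: "inj unit_vec"
  by (auto simp: inj_def unit_vec_def fun_eq_iff)

lemma card_unit_vecs: "card (unit_vec ` {..<n}) = n"
  by (subst card_image) (auto intro: inj_on_subset[OF inj_unit_vec])

lemma sum_delta_mult:
  "finite A \<Longrightarrow> (\<Sum>k\<in>A. f k * (if i = k then 1 else 0)) = (if i \<in> A then f i else (0::'a::semiring_1))"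
  by (induct A rule: finite_induct) auto

lemma span_unit_vecs: "V.span (unit_vec ` {..<n}) = vecs n"
proof
  show "V.span (unit_vec ` {..<n}) \<subseteq> vecs n"
    by (rule V.span_minimal[OF _ subspace_vecs]) (auto simp: vecs_def unit_vec_def)
  show "vecs n \<subseteq> V.span (unit_vec ` {..<n})"
  proof
    fix x assume x: "x \<in> vecs n"
    have "x = (\<Sum>i<n. vscale (x i) (unit_vec i))"
      using x by (simp add: fun_eq_iff sum_fun_apply vscale_def unit_vec_def sum_delta_mult vecs_def)
    also have "\<dots> \<in> V.span (unit_vec ` {..<n})"
      by (intro V.span_sum V.span_scale V.span_base) auto
    finally show "x \<in> V.span (unit_vec ` {..<n})" .
  qed
qed

lemma independent_unit_vecs: "V.independent (unit_vec ` {..<n} :: (nat \<Rightarrow> 'a::field) set)"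
  unfolding V.dependent_finite[OF finite_imageI[OF finite_lessThan]]
proof (rule notI, elim exE conjE)
  fix u :: "(nat \<Rightarrow> 'a) \<Rightarrow> 'a"
  assume "\<exists>v\<in>unit_vec ` {..<n}. u v \<noteq> 0" and sum0: "(\<Sum>v\<in>unit_vec ` {..<n}. vscale (u v) v) = 0"
  then obtain i where i: "i < n" "u (unit_vec i) \<noteq> 0" by auto
  have "(\<Sum>v\<in>unit_vec ` {..<n}. vscale (u v) v) i = (\<Sum>k<n. vscale (u (unit_vec k)) (unit_vec k)) i"
    by (subst sum.reindex) (auto intro: inj_on_subset[OF inj_unit_vec])
  also have "\<dots> = u (unit_vec i)"
    using i by (simp add: sum_fun_apply vscale_def sum_delta_mult unit_vec_def)
  finally show False using i sum0 by simp
qed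

lemma kspace_vecs: "n \<le> m \<Longrightarrow> kspace m n (vecs n)"
  unfolding kspace_iff
proof (intro exI[of _ "unit_vec ` {..<n}"] conjI)
  show "n \<le> m \<Longrightarrow> unit_vec ` {..<n} \<subseteq> vecs m" by (auto simp: vecs_def unit_vec_def)
qed (auto simp: card_unit_vecs independent_unit_vecs span_unit_vecs)

lemma span_eq_if_card_eq:
  assumes "finite B" "V.independent B" "V.independent C" "C \<subseteq> V.span B" "card C = card B"
  shows "V.span C = V.span B"
proof
  show "V.span C \<subseteq> V.span B" using assms(4) by (simp add: V.span_minimal)
  show "V.span B \<subseteq> V.span C"
  proof (rule ccontr)
    assume "\<not> V.span B \<subseteq> V.span C"
    then obtain x where x: "x \<in> V.span B" "x \<notin> V.span C" by auto
    have fin: "finite C" using V.independent_span_bound[OF assms(1,3,4)] by simp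
    have "V.independent (insert x C)" using x assms(3) by (simp add: V.independent_insertI)
    moreover have "insert x C \<subseteq> V.span B" using x assms(4) by auto
    ultimately have "card (insert x C) \<le> card B" using V.independent_span_bound[OF assms(1)] by blast
    moreover have "x \<notin> C" using x V.span_base by blast
    ultimately show False using fin assms(5) by simp
  qed
qed

lemma card_eq_if_span_eq:
  assumes "finite B" "finite C" "V.independent B" "V.independent C" "V.span B = V.span C"
  shows "card B = card C"
  using V.independent_span_bound[OF assms(1,4)] V.independent_span_bound[OF assms(2,3)]
    V.span_superset assms(5) by (metis le_antisym)

lemma subspace_has_finite_basis:
  assumes "V.subspace W" "W \<subseteq> V.span B" "finite B"
  obtains C where "finite C" "C \<subseteq> W" "V.independent C" "V.span C = W"
proof -
  obtain C where C: "C \<subseteq> W" "V.independent C" "W \<subseteq> V.span C"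
    using V.maximal_independent_subset by blast
  have "finite C" using V.independent_span_bound[OF assms(3) C(2)] C(1) assms(2) by blast
  moreover have "V.span C = W" using C assms(1) V.span_minimal by blast
  ultimately show ?thesis using C that by blast
qed

lemma hyperplane_split:
  assumes H: "kspace n (n - 1) H" and u: "u \<in> vecs n" "u \<notin> H" and y: "y \<in> vecs n"
  obtains a where "y - vscale a u \<in> H"
proof -
  obtain D where D: "finite D" "card D = n - 1" "D \<subseteq> vecs n" "V.independent D" "H = V.span D"
    using H unfolding kspace_iff by blast
  have "u \<noteq> 0" using u D V.span_zero[of D] by blast
  then have "n \<ge> 1" using u by (auto simp: vecs_def fun_eq_iff)
  have ind: "V.independent (insert u D)" using u D by (simp add: V.independent_insertI)
  have "card (insert u D) = n" using u D \<open>n \<ge> 1\<close> V.span_base by (subst card_insert_disjoint) auto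
  moreover have "insert u D \<subseteq> V.span (unit_vec ` {..<n})" using u D span_unit_vecs[of n] by auto
  ultimately have "V.span (insert u D) = vecs n"
    using span_eq_if_card_eq[OF _ independent_unit_vecs ind] by (simp add: card_unit_vecs span_unit_vecs)
  then show ?thesis using y D V.span_breakdown_eq that by blast
qed

lemma kspace_inter_hyperplane:
  assumes U: "kspace n k U" and H: "kspace n (n - 1) H" and nU: "\<not> U \<subseteq> H"
  shows "kspace n (k - 1) (U \<inter> H)"
proof -
  obtain B where B: "finite B" "card B = k" "B \<subseteq> vecs n" "V.independent B" "U = V.span B"
    using U unfolding kspace_iff by blast
  have sU: "V.subspace U" "U \<subseteq> vecs n" using kspace_imp_subspace[OF U] by auto
  have sH: "V.subspace H" using kspace_imp_subspace[OF H] by auto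
  obtain C where C: "finite C" "C \<subseteq> U \<inter> H" "V.independent C" "V.span C = U \<inter> H"
    using subspace_has_finite_basis[of "U \<inter> H" B] B sU sH by (auto simp: V.subspace_inter)
  obtain u where u: "u \<in> U" "u \<notin> H" using nU by blast
  have ind: "V.independent (insert u C)" using u C by (simp add: V.independent_insertI)
  have "V.span (insert u C) = U"
  proof
    show "V.span (insert u C) \<subseteq> U" using u C sU V.span_minimal by (metis Int_subset_iff insert_subset)
    show "U \<subseteq> V.span (insert u C)"
    proof
      fix y assume y: "y \<in> U"
      obtain a where a: "y - vscale a u \<in> H" using hyperplane_split[OF H _ u(2)] u y sU by blast
      have "y - vscale a u \<in> U" using y u sU(1) by (simp add: V.subspace_diff V.subspace_scale)
      then have "y - vscale a u \<in> V.span C" using a C by simp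
      then show "y \<in> V.span (insert u C)" using V.span_breakdown_eq by blast
    qed
  qed
  then have "card (insert u C) = k" using card_eq_if_span_eq[OF _ B(1) ind B(4)] C(1) B by simp
  moreover have "u \<notin> C" using u C by auto
  ultimately have "card C = k - 1" using C(1) by simp
  then show ?thesis unfolding kspace_iff using C sU by (intro exI[of _ C]) auto
qed

lemma kspace_image:
  assumes f: "module_hom vscale vscale f" and W: "kspace n k W"
    and inj: "inj_on f W" and sub: "f ` W \<subseteq> vecs m"
  shows "kspace m k (f ` W)"
proof -
  obtain B where B: "finite B" "card B = k" "B \<subseteq> vecs n" "V.independent B" "W = V.span B"
    using W unfolding kspace_iff by blast
  have BW: "B \<subseteq> W" using B V.span_superset by blast
  show ?thesis unfolding kspace_iff
  proof (intro exI[of _ "f ` B"] conjI)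
    show "card (f ` B) = k" using B BW inj by (simp add: card_image inj_on_subset)
    show "V.independent (f ` B)" using module_hom.independent_injective_image[OF f B(4)] inj B by simp
    show "f ` W = V.span (f ` B)" using module_hom.span_image[OF f] B by simp
  qed (use B BW sub in auto)
qed

lemma points_iff: "P \<in> points n \<longleftrightarrow> (\<exists>x. x \<in> vecs n \<and> x \<noteq> 0 \<and> P = V.span {x})"
proof
  assume "P \<in> points n"
  then obtain B where B: "finite B" "card B = 1" "B \<subseteq> vecs n" "V.independent B" "P = V.span B"
    unfolding points_def kspace_iff by blast
  then obtain x where "B = {x}" using card_1_singletonE by blast
  then show "\<exists>x. x \<in> vecs n \<and> x \<noteq> 0 \<and> P = V.span {x}" using B by auto
next
  assume "\<exists>x. x \<in> vecs n \<and> x \<noteq> 0 \<and> P = V.span {x}"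
  then obtain x where "x \<in> vecs n" "x \<noteq> 0" "P = V.span {x}" by blast
  then show "P \<in> points n" unfolding points_def kspace_iff by (intro CollectI exI[of _ "{x}"]) auto
qed

lemma points_subset_vecs: "P \<in> points n \<Longrightarrow> P \<subseteq> vecs n"
  unfolding points_def using kspace_imp_subspace by blast

definition point_rep :: "(nat \<Rightarrow> 'a::field) set \<Rightarrow> (nat \<Rightarrow> 'a)" where
  "point_rep P = (SOME x. x \<in> P \<and> x \<noteq> 0)"

lemma point_rep:
  assumes "P \<in> points n"
  shows "point_rep P \<in> vecs n" "point_rep P \<noteq> 0" "V.span {point_rep P} = P"
proof -
  obtain x where x: "x \<in> vecs n" "x \<noteq> 0" "P = V.span {x}" using assms points_iff by blast
  have "\<exists>y. y \<in> P \<and> y \<noteq> 0" using x V.span_base by blast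
  then have r: "point_rep P \<in> P" "point_rep P \<noteq> 0"
    unfolding point_rep_def by (metis (mono_tags, lifting) someI_ex)+
  then show "point_rep P \<noteq> 0" by simp
  show "point_rep P \<in> vecs n" using r points_subset_vecs[OF assms] by blast
  obtain k where k: "point_rep P = vscale k x" using r x V.span_singleton by auto
  have "k \<noteq> 0" using k r by (auto simp: vscale_def zero_fun_def)
  then have "x = vscale (inverse k) (point_rep P)" using k by (simp add: vscale_def fun_eq_iff)
  then have "x \<in> V.span {point_rep P}" by (simp add: V.span_base V.span_scale)
  then show "V.span {point_rep P} = P"
    using r x span_singleton_subset_iff V.subspace_span by (metis subset_antisym)
qed

lemma finite_vecs: "finite (vecs n :: (nat \<Rightarrow> 'a::{field,finite}) set)"
proof -
  let ?of_list = "\<lambda>xs i. if i < n then xs ! i else (0::'a)"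
  have "vecs n \<subseteq> ?of_list ` {xs. set xs \<subseteq> UNIV \<and> length xs = n}"
  proof
    fix x :: "nat \<Rightarrow> 'a" assume "x \<in> vecs n"
    then have "x = ?of_list (map x [0..<n])" by (auto simp: vecs_def fun_eq_iff)
    then show "x \<in> ?of_list ` {xs. set xs \<subseteq> UNIV \<and> length xs = n}" by auto
  qed
  then show ?thesis by (rule finite_subset) (intro finite_imageI finite_lists_length_eq finite_UNIV)
qed

lemma finite_points: "finite (points n :: (nat \<Rightarrow> 'a::{field,finite}) set set)"
  using finite_vecs[of n] points_subset_vecs[of _ n] by (meson Pow_iff finite_Pow_iff finite_subset subsetI)

section \<open>Adjoining a coordinate\<close>

definition proj_vec :: "nat \<Rightarrow> (nat \<Rightarrow> 'a::field) \<Rightarrow> (nat \<Rightarrow> 'a)" where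
  "proj_vec v x = (\<lambda>i. if i < v then x i else 0)"

lemma module_hom_proj_vec: "module_hom vscale vscale (proj_vec v)"
  by (rule module_hom_vscale_intro) (auto simp: proj_vec_def vscale_def fun_eq_iff)

lemma proj_vec_in_vecs: "proj_vec v x \<in> vecs v"
  by (simp add: proj_vec_def vecs_def)

lemma proj_vec_id: "x \<in> vecs v \<Longrightarrow> proj_vec v x = x"
  by (auto simp: proj_vec_def vecs_def fun_eq_iff)

lemma proj_vec_plus_unit_vec: "x \<in> vecs v \<Longrightarrow> proj_vec v (x + vscale a (unit_vec v)) = x"
  by (auto simp: proj_vec_def vecs_def fun_eq_iff vscale_def unit_vec_def)

lemma vecs_Suc_decomp: "x \<in> vecs (Suc v) \<Longrightarrow> x = proj_vec v x + vscale (x v) (unit_vec v)"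
  by (auto simp: proj_vec_def vecs_def fun_eq_iff vscale_def unit_vec_def)

lemma plus_unit_vec_in_vecs_Suc: "x \<in> vecs v \<Longrightarrow> x + vscale a (unit_vec v) \<in> vecs (Suc v)"
  by (auto simp: vecs_def vscale_def unit_vec_def)

lemma unit_vec_in_vecs_Suc: "unit_vec v \<in> vecs (Suc v)"
  by (simp add: unit_vec_def vecs_def)

lemma vecs_subset_Suc: "vecs v \<subseteq> vecs (Suc v)"
  by (auto simp: vecs_def)

definition lift_point :: "nat \<Rightarrow> (nat \<Rightarrow> 'a::field) set \<times> 'a \<Rightarrow> (nat \<Rightarrow> 'a) set" where
  "lift_point v p = V.span {point_rep (fst p) + vscale (snd p) (unit_vec v)}"

definition lift_set :: "nat \<Rightarrow> (nat \<Rightarrow> 'a::field) set set \<Rightarrow> (nat \<Rightarrow> 'a) set set" where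
  "lift_set v S = lift_point v ` (S \<times> UNIV)"

lemma lift_point_subset_iff:
  "V.subspace H \<Longrightarrow> lift_point v (P, a) \<subseteq> H \<longleftrightarrow> point_rep P + vscale a (unit_vec v) \<in> H"
  unfolding lift_point_def fst_conv snd_conv by (rule span_singleton_subset_iff)

lemma lift_point_in_points:
  assumes "P \<in> points v"
  shows "lift_point v (P, a) \<in> points (Suc v)"
proof -
  let ?y = "point_rep P + vscale a (unit_vec v)"
  have "proj_vec v ?y = point_rep P" using proj_vec_plus_unit_vec[OF point_rep(1)[OF assms]] .
  then have "?y \<noteq> 0" using point_rep(2)[OF assms] module_hom.zero[OF module_hom_proj_vec] by metis
  moreover have "?y \<in> vecs (Suc v)" using plus_unit_vec_in_vecs_Suc[OF point_rep(1)[OF assms]] .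
  ultimately show ?thesis unfolding lift_point_def points_iff fst_conv snd_conv by blast
qed

lemma proj_lift_point: "P \<in> points v \<Longrightarrow> proj_vec v ` lift_point v (P, a) = P"
  unfolding lift_point_def fst_conv snd_conv module_hom.span_image[OF module_hom_proj_vec, symmetric]
  using point_rep[of P v] by (simp add: proj_vec_plus_unit_vec)

lemma inj_on_lift_point: "S \<subseteq> points v \<Longrightarrow> inj_on (lift_point v) (S \<times> UNIV)"
proof (rule inj_onI, clarify)
  fix P a P' a'
  assume S: "S \<subseteq> points v" and P: "P \<in> S" "P' \<in> S" and eq: "lift_point v (P, a) = lift_point v (P', a')"
  have P': "P' = P" using proj_lift_point[of P v a] proj_lift_point[of P' v a'] eq P S by auto
  have Pp: "P \<in> points v" using P S by auto
  let ?y = "point_rep P + vscale a (unit_vec v)" and ?y' = "point_rep P + vscale a' (unit_vec v)"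
  have "?y \<in> V.span {?y'}" using eq P' unfolding lift_point_def by (metis V.span_base singletonI fst_conv snd_conv)
  then obtain k where k: "?y = vscale k ?y'" using V.span_singleton by auto
  have "point_rep P = vscale k (point_rep P)"
    using arg_cong[OF k, of "proj_vec v"] point_rep(1)[OF Pp]
    by (simp add: proj_vec_plus_unit_vec module_hom.scale[OF module_hom_proj_vec])
  then have "k = 1" using point_rep(2)[OF Pp] by (auto simp: vscale_def fun_eq_iff)
  then have "a = a'"
    using fun_cong[OF k, of v] point_rep(1)[OF Pp] by (simp add: vscale_def unit_vec_def vecs_def)
  then show "P = P' \<and> a = a'" using P' by simp
qed

lemma card_lift_set:
  fixes S :: "(nat \<Rightarrow> 'a::{field,finite}) set set"
  assumes "S \<subseteq> points v" "finite S"
  shows "card (lift_set v S) = card S * card (UNIV :: 'a set)"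
  unfolding lift_set_def using card_image[OF inj_on_lift_point[OF assms(1)]] assms(2)
  by (simp add: card_cartesian_product)

lemma spanning_lift_set:
  assumes S: "S \<subseteq> points v" "S \<noteq> {}" "spanning v S"
  shows "spanning (Suc v) (lift_set v S)"
proof -
  let ?W = "V.span (\<Union>(lift_set v S))"
  have "\<Union>(lift_set v S) \<subseteq> vecs (Suc v)"
    using S(1) lift_point_in_points points_subset_vecs unfolding lift_set_def by blast
  then have "?W \<subseteq> vecs (Suc v)" using V.span_minimal subspace_vecs by blast
  have lifted_rep: "point_rep P + vscale a (unit_vec v) \<in> ?W" if "P \<in> S" for P a
  proof -
    have "point_rep P + vscale a (unit_vec v) \<in> lift_point v (P, a)"
      unfolding lift_point_def by (simp add: V.span_base)
    then show ?thesis using that unfolding lift_set_def by (intro V.span_base) blast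
  qed
  have "\<Union>S \<subseteq> ?W"
  proof
    fix x assume "x \<in> \<Union>S"
    then obtain P where P: "P \<in> S" "x \<in> P" by blast
    have "point_rep P \<in> ?W" using lifted_rep[OF P(1), of 0] by simp
    then have "V.span {point_rep P} \<subseteq> ?W" using span_singleton_subset_iff[OF V.subspace_span] by blast
    then show "x \<in> ?W" using P point_rep(3)[of P v] S(1) by auto
  qed
  then have "vecs v \<subseteq> ?W"
    using S(3) V.span_minimal unfolding spanning_def lspan_eq_span by blast
  obtain P where P: "P \<in> S" using S(2) by blast
  have "(point_rep P + vscale 1 (unit_vec v)) - (point_rep P + vscale 0 (unit_vec v)) \<in> ?W"
    using lifted_rep[OF P, of 1] lifted_rep[OF P, of 0] by (rule V.span_diff)
  then have "unit_vec v \<in> ?W" by simp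
  have "vecs (Suc v) \<subseteq> ?W"
  proof
    fix y :: "nat \<Rightarrow> 'a" assume y: "y \<in> vecs (Suc v)"
    have "proj_vec v y + vscale (y v) (unit_vec v) \<in> ?W"
      using \<open>vecs v \<subseteq> ?W\<close> \<open>unit_vec v \<in> ?W\<close> proj_vec_in_vecs by (intro V.span_add V.span_scale) auto
    then show "y \<in> ?W" using vecs_Suc_decomp[OF y] by simp
  qed
  with \<open>?W \<subseteq> vecs (Suc v)\<close> show ?thesis unfolding spanning_def lspan_eq_span by blast
qed

lemma card_lift_set_in_hyperplane_through_unit_vec:
  fixes S :: "(nat \<Rightarrow> 'a::{field,finite}) set set"
  assumes S: "S \<subseteq> points v" "finite S" and H: "V.subspace H" "unit_vec v \<in> H"
  shows "card {P \<in> lift_set v S. P \<subseteq> H} = card {P \<in> S. P \<subseteq> H} * card (UNIV :: 'a set)"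
proof -
  have "point_rep P + vscale a (unit_vec v) \<in> H \<longleftrightarrow> P \<subseteq> H" if P: "P \<in> S" for P a
  proof -
    have "vscale a (unit_vec v) \<in> H" using H by (simp add: V.subspace_scale)
    then have "point_rep P + vscale a (unit_vec v) \<in> H \<longleftrightarrow> point_rep P \<in> H"
      using H(1) V.subspace_add V.subspace_diff by fastforce
    also have "\<dots> \<longleftrightarrow> P \<subseteq> H"
      using span_singleton_subset_iff[OF H(1), of "point_rep P"] point_rep(3)[of P v] P S(1) by auto
    finally show ?thesis .
  qed
  then have "{p \<in> S \<times> UNIV. lift_point v p \<subseteq> H} = {P \<in> S. P \<subseteq> H} \<times> UNIV"
    using lift_point_subset_iff[OF H(1)] by (simp add: set_eq_iff) blast
  moreover have "{P \<in> lift_set v S. P \<subseteq> H} = lift_point v ` {p \<in> S \<times> UNIV. lift_point v p \<subseteq> H}"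
    unfolding lift_set_def by auto
  ultimately show ?thesis
    using card_image[OF inj_on_subset[OF inj_on_lift_point[OF S(1)]], of "{P \<in> S. P \<subseteq> H} \<times> UNIV"]
    by (auto simp: card_cartesian_product)
qed

lemma card_lift_set_in_hyperplane_avoiding_unit_vec:
  fixes S :: "(nat \<Rightarrow> 'a::{field,finite}) set set"
  assumes S: "S \<subseteq> points v" and H: "kspace (Suc v) v H" "unit_vec v \<notin> H"
  shows "card {P \<in> lift_set v S. P \<subseteq> H} = card S"
proof -
  have sH: "V.subspace H" using kspace_imp_subspace[OF H(1)] by blast
  define A where "A = {p \<in> S \<times> UNIV. lift_point v p \<subseteq> H}"
  have A_iff: "(P, a) \<in> A \<longleftrightarrow> P \<in> S \<and> point_rep P + vscale a (unit_vec v) \<in> H" for P a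
    unfolding A_def using lift_point_subset_iff[OF sH] by auto
  \<comment> \<open>Above each point of \<open>S\<close> exactly one lift lies in \<open>H\<close>.\<close>
  have "inj_on fst A"
  proof (rule inj_onI, clarify)
    fix P a P' a' assume "(P, a) \<in> A" "(P', a') \<in> A" "fst (P, a) = fst (P', a')"
    then have "P' = P" and in_H: "point_rep P + vscale a (unit_vec v) \<in> H" "point_rep P + vscale a' (unit_vec v) \<in> H"
      using A_iff by auto
    have "vscale (a - a') (unit_vec v) = (point_rep P + vscale a (unit_vec v)) - (point_rep P + vscale a' (unit_vec v))"
      by (simp add: V.scale_left_diff_distrib)
    also have "\<dots> \<in> H" using V.subspace_diff[OF sH in_H] .
    finally have "vscale (inverse (a - a')) (vscale (a - a') (unit_vec v)) \<in> H"
      by (rule V.subspace_scale[OF sH])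
    then show "P = P' \<and> a = a'" using H(2) \<open>P' = P\<close> by (cases "a = a'") (auto simp: V.scale_scale)
  qed
  moreover have "fst ` A = S"
  proof
    show "fst ` A \<subseteq> S" using A_iff by auto
    show "S \<subseteq> fst ` A"
    proof
      fix P assume P: "P \<in> S"
      have "P \<in> points v" using P S by blast
      then have "point_rep P \<in> vecs v" by (rule point_rep(1))
      then have rep: "point_rep P \<in> vecs (Suc v)" using vecs_subset_Suc[of v] by blast
      have "kspace (Suc v) (Suc v - 1) H" using H(1) by simp
      then obtain a where "point_rep P - vscale a (unit_vec v) \<in> H"
        by (rule hyperplane_split[OF _ unit_vec_in_vecs_Suc H(2) rep])
      then have "point_rep P + vscale (- a) (unit_vec v) \<in> H" by simp
      then have "(P, - a) \<in> A" using P A_iff by blast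
      then show "P \<in> fst ` A" by force
    qed
  qed
  moreover have "{P \<in> lift_set v S. P \<subseteq> H} = lift_point v ` A"
    unfolding lift_set_def A_def by auto
  ultimately show ?thesis
    using card_image[OF inj_on_subset[OF inj_on_lift_point[OF S]]] card_image[of fst A]
    unfolding A_def by auto
qed

lemma dvd_card_points_in_hyperplane_Suc:
  fixes S :: "(nat \<Rightarrow> 'a::{field,finite}) set set"
  assumes S: "S \<subseteq> points v" "divisible v r S" "card (UNIV :: 'a set) ^ r dvd card S"
    and H: "kspace (Suc v) v H"
  shows "card (UNIV :: 'a set) ^ r dvd card {P \<in> S. P \<subseteq> H}"
proof (cases "vecs v \<subseteq> H")
  case True
  then have "{P \<in> S. P \<subseteq> H} = S" using S(1) points_subset_vecs by blast
  then show ?thesis using S(3) by simp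
next
  case False
  have "kspace v (v - 1) (vecs v \<inter> H)"
    using kspace_inter_hyperplane[OF kspace_vecs[of v "Suc v"]] H False
    by (auto intro: kspace_vecs_mono)
  then have "card {P \<in> S. P \<subseteq> vecs v \<inter> H} mod card (UNIV :: 'a set) ^ r = card S mod card (UNIV :: 'a set) ^ r"
    using S(2) unfolding divisible_def by blast
  moreover have "{P \<in> S. P \<subseteq> vecs v \<inter> H} = {P \<in> S. P \<subseteq> H}"
    using S(1) points_subset_vecs by blast
  ultimately show ?thesis using S(3) by (simp add: dvd_eq_mod_eq_0)
qed

lemma divisible_lift_set:
  fixes S :: "(nat \<Rightarrow> 'a::{field,finite}) set set"
  assumes S: "S \<subseteq> points v" "finite S" "card S = card (UNIV :: 'a set) ^ (r + 1)" "divisible v r S"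
  shows "divisible (Suc v) (Suc r) (lift_set v S)"
  unfolding divisible_def
proof (intro allI impI)
  let ?q = "card (UNIV :: 'a set)"
  fix H :: "(nat \<Rightarrow> 'a) set" assume "kspace (Suc v) (Suc v - 1) H"
  then have H: "kspace (Suc v) v H" by simp
  have "?q ^ Suc r dvd card {P \<in> lift_set v S. P \<subseteq> H}"
  proof (cases "unit_vec v \<in> H")
    case True
    have "?q ^ r dvd card {P \<in> S. P \<subseteq> H}"
      using dvd_card_points_in_hyperplane_Suc[OF S(1,4) _ H] S(3) by simp
    then show ?thesis
      using card_lift_set_in_hyperplane_through_unit_vec[OF S(1,2) _ True] kspace_imp_subspace[OF H] by auto
  next
    case False
    then show ?thesis using card_lift_set_in_hyperplane_avoiding_unit_vec[OF S(1) H] S(3) by simp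
  qed
  moreover have "?q ^ Suc r dvd card (lift_set v S)"
    using card_lift_set[OF S(1,2)] S(3) by simp
  ultimately show "card {P \<in> lift_set v S. P \<subseteq> H} mod ?q ^ Suc r = card (lift_set v S) mod ?q ^ Suc r"
    by (simp add: dvd_eq_mod_eq_0)
qed

section \<open>Graph hyperplanes\<close>

lemma inj_on_image_subset_iff:
  assumes "inj_on f C" "A \<subseteq> C" "B \<subseteq> C"
  shows "f ` A \<subseteq> f ` B \<longleftrightarrow> A \<subseteq> B"
  using assms(2) inj_on_image_mem_iff[OF assms(1) _ assms(3)] by blast

definition graph_map :: "'a::field \<Rightarrow> nat \<Rightarrow> nat \<Rightarrow> (nat \<Rightarrow> 'a) \<Rightarrow> (nat \<Rightarrow> 'a)" where
  "graph_map c j v x = x + vscale (c * x j) (unit_vec v)"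

text \<open>The hyperplane \<open>x\<^sub>v = c x\<^sub>j\<close> of \<open>F\<^sup>v\<^sup>+\<^sup>1\<close>, on which \<open>proj_vec v\<close> is injective.\<close>

definition graph_hyp :: "'a::field \<Rightarrow> nat \<Rightarrow> nat \<Rightarrow> (nat \<Rightarrow> 'a) set" where
  "graph_hyp c j v = graph_map c j v ` vecs v"

lemma module_hom_graph_map: "module_hom vscale vscale (graph_map c j v)"
  by (rule module_hom_vscale_intro) (auto simp: graph_map_def vscale_def fun_eq_iff algebra_simps)

lemma proj_graph_map: "x \<in> vecs v \<Longrightarrow> proj_vec v (graph_map c j v x) = x"
  unfolding graph_map_def by (rule proj_vec_plus_unit_vec)

lemma graph_map_in_vecs: "x \<in> vecs v \<Longrightarrow> graph_map c j v x \<in> vecs (Suc v)"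
  unfolding graph_map_def by (rule plus_unit_vec_in_vecs_Suc)

lemma graph_map_proj: "z \<in> graph_hyp c j v \<Longrightarrow> graph_map c j v (proj_vec v z) = z"
  unfolding graph_hyp_def using proj_graph_map by fastforce

lemma inj_on_proj_graph_hyp: "inj_on (proj_vec v) (graph_hyp c j v)"
  by (metis inj_on_inverseI graph_map_proj)

lemma kspace_graph_hyp: "kspace (Suc v) v (graph_hyp c j v)"
  unfolding graph_hyp_def
  by (rule kspace_image[OF module_hom_graph_map kspace_vecs])
     (auto intro: inj_on_inverseI proj_graph_map graph_map_in_vecs)

text \<open>
  A vector with a nonzero coordinate \<open>j < v\<close> is avoided by a suitable slope \<open>c\<close>;
  otherwise it is a nonzero multiple of \<open>e\<^sub>v\<close>, which lies in no graph hyperplane.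
\<close>

lemma exists_graph_hyp_avoiding:
  assumes "f \<in> vecs (Suc v)" "f \<noteq> 0"
  obtains c j where "f \<notin> graph_hyp c j v"
proof (cases "proj_vec v f = 0")
  case True
  have "f \<notin> graph_hyp 0 0 v"
  proof
    assume "f \<in> graph_hyp 0 0 v"
    then have "f \<in> vecs v" by (auto simp: graph_hyp_def graph_map_def vscale_def zero_fun_def[symmetric])
    then show False using True assms proj_vec_id by metis
  qed
  then show ?thesis by (rule that)
next
  case False
  then obtain j where j: "j < v" "f j \<noteq> 0" by (auto simp: proj_vec_def fun_eq_iff split: if_splits)
  define c where "c = (f v + 1) / f j"
  have "f \<notin> graph_hyp c j v"
  proof
    assume "f \<in> graph_hyp c j v"
    then obtain x where "x \<in> vecs v" "f = graph_map c j v x" unfolding graph_hyp_def by blast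
    then have "f v = c * x j" "f j = x j"
      using j(1) by (simp_all add: graph_map_def vscale_def unit_vec_def vecs_def)
    then show False using j(2) by (simp add: c_def)
  qed
  then show ?thesis by (rule that)
qed

lemma kspace_proj_graph_hyp_section:
  assumes "kspace (Suc v) k W" "\<not> W \<subseteq> graph_hyp c j v"
  shows "kspace v (k - 1) (proj_vec v ` (W \<inter> graph_hyp c j v))"
  using kspace_inter_hyperplane[OF assms(1) _ assms(2)] kspace_graph_hyp
  by (intro kspace_image[OF module_hom_proj_vec] inj_on_subset[OF inj_on_proj_graph_hyp])
     (auto simp: proj_vec_in_vecs)

lemma proj_point_in_points:
  assumes "P \<in> points (Suc v)" "P \<subseteq> graph_hyp c j v"
  shows "proj_vec v ` P \<in> points v"
proof -
  have "kspace (Suc v) 1 P" using assms(1) unfolding points_def by simp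
  moreover have "inj_on (proj_vec v) P" using inj_on_subset[OF inj_on_proj_graph_hyp assms(2)] .
  moreover have "proj_vec v ` P \<subseteq> vecs v" using proj_vec_in_vecs by blast
  ultimately show ?thesis unfolding points_def by (simp add: kspace_image[OF module_hom_proj_vec])
qed

lemma graph_point_in_points:
  assumes "P \<in> points v"
  shows "graph_map c j v ` P \<in> points (Suc v)"
proof -
  have "P \<subseteq> vecs v" using points_subset_vecs[OF assms] .
  then have "inj_on (graph_map c j v) P" "graph_map c j v ` P \<subseteq> vecs (Suc v)"
    by (metis inj_on_inverseI proj_graph_map subsetD) (use \<open>P \<subseteq> vecs v\<close> graph_map_in_vecs in blast)
  moreover have "kspace v 1 P" using assms unfolding points_def by simp
  ultimately show ?thesis unfolding points_def by (simp add: kspace_image[OF module_hom_graph_map])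
qed

lemma proj_graph_image: "P \<subseteq> vecs v \<Longrightarrow> proj_vec v ` graph_map c j v ` P = P"
  by (force simp: image_image proj_graph_map)

lemma graph_image_subset_graph_hyp: "P \<subseteq> vecs v \<Longrightarrow> graph_map c j v ` P \<subseteq> graph_hyp c j v"
  unfolding graph_hyp_def by blast

lemma image_proj_points_section:
  fixes F L :: "(nat \<Rightarrow> 'a::field) set" and c :: 'a and j v :: nat
  defines "H \<equiv> graph_hyp c j v"
  shows "(`) (proj_vec v) ` {P \<in> points (Suc v). P \<subseteq> H \<and> P \<subseteq> L \<and> \<not> P \<subseteq> F}
    = {Q \<in> points v. Q \<subseteq> proj_vec v ` (L \<inter> H) \<and> \<not> Q \<subseteq> proj_vec v ` (F \<inter> H)}"
    (is "_ = ?R")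
proof -
  have iff: "proj_vec v ` P \<subseteq> proj_vec v ` (W \<inter> H) \<longleftrightarrow> P \<subseteq> W" if "P \<subseteq> H" for P W
    using that inj_on_image_subset_iff[OF inj_on_proj_graph_hyp, where A = P and B = "W \<inter> H"]
    unfolding H_def by blast
  show ?thesis
  proof
    show "(`) (proj_vec v) ` {P \<in> points (Suc v). P \<subseteq> H \<and> P \<subseteq> L \<and> \<not> P \<subseteq> F} \<subseteq> ?R"
    proof
      fix Q assume "Q \<in> (`) (proj_vec v) ` {P \<in> points (Suc v). P \<subseteq> H \<and> P \<subseteq> L \<and> \<not> P \<subseteq> F}"
      then obtain P where P: "P \<in> points (Suc v)" "P \<subseteq> H" "P \<subseteq> L" "\<not> P \<subseteq> F"
        and Q: "Q = proj_vec v ` P" by blast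
      have "proj_vec v ` P \<in> points v" using proj_point_in_points P(1,2) unfolding H_def by blast
      then show "Q \<in> ?R" using Q P(3,4) by (simp add: iff[OF P(2)])
    qed
    show "?R \<subseteq> (`) (proj_vec v) ` {P \<in> points (Suc v). P \<subseteq> H \<and> P \<subseteq> L \<and> \<not> P \<subseteq> F}"
    proof
      fix Q assume Q: "Q \<in> ?R"
      then have "Q \<subseteq> vecs v" using points_subset_vecs by blast
      then have H: "graph_map c j v ` Q \<subseteq> H" and proj: "proj_vec v ` graph_map c j v ` Q = Q"
        unfolding H_def by (simp_all add: graph_image_subset_graph_hyp proj_graph_image)
      have "graph_map c j v ` Q \<in> points (Suc v)" using Q graph_point_in_points by blast
      then have "graph_map c j v ` Q \<in> {P \<in> points (Suc v). P \<subseteq> H \<and> P \<subseteq> L \<and> \<not> P \<subseteq> F}"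
        using Q H by (simp add: iff[OF H, symmetric] proj)
      then show "Q \<in> (`) (proj_vec v) ` {P \<in> points (Suc v). P \<subseteq> H \<and> P \<subseteq> L \<and> \<not> P \<subseteq> F}"
        using proj by (intro image_eqI[of _ _ "graph_map c j v ` Q"]) auto
    qed
  qed
qed

lemma image_proj_lift_set_section:
  assumes "S \<subseteq> points v"
  shows "(`) (proj_vec v) ` {P \<in> lift_set v S. P \<subseteq> graph_hyp c j v} = S"
proof
  show "(`) (proj_vec v) ` {P \<in> lift_set v S. P \<subseteq> graph_hyp c j v} \<subseteq> S"
    using assms proj_lift_point unfolding lift_set_def by fastforce
  show "S \<subseteq> (`) (proj_vec v) ` {P \<in> lift_set v S. P \<subseteq> graph_hyp c j v}"
  proof
    fix P assume P: "P \<in> S"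
    then have Pp: "P \<in> points v" using assms by blast
    let ?P' = "lift_point v (P, c * point_rep P j)"
    have "point_rep P + vscale (c * point_rep P j) (unit_vec v) \<in> graph_hyp c j v"
      using point_rep(1)[OF Pp] unfolding graph_hyp_def graph_map_def by blast
    then have "?P' \<subseteq> graph_hyp c j v"
      using lift_point_subset_iff kspace_imp_subspace[OF kspace_graph_hyp] by blast
    moreover have "?P' \<in> lift_set v S" using P unfolding lift_set_def by simp
    ultimately show "P \<in> (`) (proj_vec v) ` {P \<in> lift_set v S. P \<subseteq> graph_hyp c j v}"
      using proj_lift_point[OF Pp] by (intro image_eqI[of _ _ ?P']) auto
  qed
qed

lemma image_mset_proj_graph_hyp:
  assumes "\<forall>P\<in>A. P \<subseteq> graph_hyp c j v"
  shows "image_mset ((`) (proj_vec v)) (mset_set A) = mset_set ((`) (proj_vec v) ` A)"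
proof (rule image_mset_mset_set, rule inj_onI)
  fix P Q assume "P \<in> A" "Q \<in> A" and eq: "proj_vec v ` P = proj_vec v ` Q"
  then have "P \<subseteq> graph_hyp c j v" "Q \<subseteq> graph_hyp c j v" using assms by simp_all
  then show "P = Q" using eq by (simp add: inj_on_image_eq_iff[OF inj_on_proj_graph_hyp])
qed

section \<open>Descent from the lifted cylinder\<close>

lemma filter_mset_sum: "filter_mset P (\<Sum>i\<in>I. M i) = (\<Sum>i\<in>I. filter_mset P (M i))"
  by (induction I rule: infinite_finite_induct) auto

lemma image_mset_sum: "image_mset f (\<Sum>i\<in>I. M i) = (\<Sum>i\<in>I. image_mset f (M i))"
  by (induction I rule: infinite_finite_induct) auto

lemma kspace_Suc_obtain_nonzero:
  assumes "kspace n (Suc k) U"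
  obtains f where "f \<in> U" "f \<in> vecs n" "f \<noteq> 0"
proof -
  obtain B where B: "card B = Suc k" "B \<subseteq> vecs n" "V.independent B" "U = V.span B"
    using assms unfolding kspace_iff by blast
  then obtain f where "f \<in> B" by (metis card.empty ex_in_conv nat.distinct(1))
  then show ?thesis using B V.dependent_zero V.span_base that by blast
qed

lemma mset_set_eq_sum_graph_hyp_sections:
  fixes S :: "(nat \<Rightarrow> 'a::{field,finite}) set set" and c :: 'a and j :: nat
  assumes S: "S \<subseteq> points v" "finite S"
    and M: "mset_set (lift_set v S) = (\<Sum>i\<in>I. mset_set {P \<in> points (Suc v). P \<subseteq> L' i \<and> \<not> P \<subseteq> F'})"
  defines "H \<equiv> graph_hyp c j v"
  shows "mset_set S =
    (\<Sum>i\<in>I. mset_set {Q \<in> points v. Q \<subseteq> proj_vec v ` (L' i \<inter> H) \<and> \<not> Q \<subseteq> proj_vec v ` (F' \<inter> H)})"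
proof -
  let ?proj = "(`) (proj_vec v) :: (nat \<Rightarrow> 'a) set \<Rightarrow> _"
  let ?section = "\<lambda>i. {P \<in> points (Suc v). P \<subseteq> H \<and> P \<subseteq> L' i \<and> \<not> P \<subseteq> F'}"
  have "mset_set S = mset_set (?proj ` {P \<in> lift_set v S. P \<subseteq> H})"
    using image_proj_lift_set_section[OF S(1)] by (simp add: H_def)
  also have "\<dots> = image_mset ?proj (mset_set {P \<in> lift_set v S. P \<subseteq> H})"
    by (rule image_mset_proj_graph_hyp[where c = c and j = j, symmetric]) (simp add: H_def)
  also have "\<dots> = image_mset ?proj (filter_mset (\<lambda>P. P \<subseteq> H) (mset_set (lift_set v S)))"
    using S(2) by (simp add: lift_set_def)
  also have "\<dots> = (\<Sum>i\<in>I. image_mset ?proj (mset_set (?section i)))"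
    unfolding M filter_mset_sum image_mset_sum
    by (intro sum.cong refl arg_cong[where f = "image_mset _"]) (auto simp: finite_points conj_commute)
  also have "\<dots> = (\<Sum>i\<in>I. mset_set (?proj ` ?section i))"
    by (intro sum.cong refl image_mset_proj_graph_hyp[where c = c and j = j]) (simp add: H_def)
  finally show ?thesis unfolding H_def image_proj_points_section .
qed

lemma cylinder_of_lift_set_cylinder:
  fixes S :: "(nat \<Rightarrow> 'a::{field,finite}) set set"
  assumes S: "S \<subseteq> points v" "finite S"
    and cyl: "cylinder (Suc v) (Suc r) (mset_set (lift_set v S))"
  shows "cylinder v r (mset_set S)"
proof -
  let ?q = "card (UNIV :: 'a set)"
  obtain F' L' where F': "kspace (Suc v) (Suc r) F'"
    and L': "\<And>i. i < ?q \<Longrightarrow> kspace (Suc v) (Suc r + 1) (L' i) \<and> F' \<subseteq> L' i"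
    and M: "mset_set (lift_set v S) = (\<Sum>i<?q. mset_set {P \<in> points (Suc v). P \<subseteq> L' i \<and> \<not> P \<subseteq> F'})"
    using cyl unfolding cylinder_def by blast
  have "card S * ?q = ?q * ?q ^ (r + 1)"
    using cyl card_lift_set[OF S] unfolding cylinder_def by simp
  then have card_S: "card S = ?q ^ (r + 1)" by simp
  obtain f where f: "f \<in> F'" "f \<in> vecs (Suc v)" "f \<noteq> 0"
    using kspace_Suc_obtain_nonzero[OF F'] .
  obtain c j where "f \<notin> graph_hyp c j v" using exists_graph_hyp_avoiding[OF f(2,3)] .
  define H where "H = graph_hyp c j v"
  have F'H: "\<not> F' \<subseteq> H" using f \<open>f \<notin> graph_hyp c j v\<close> unfolding H_def by blast
  define F where "F = proj_vec v ` (F' \<inter> H)"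
  define L where "L i = proj_vec v ` (L' i \<inter> H)" for i
  have F: "kspace v r F"
    using kspace_proj_graph_hyp_section[OF F' F'H[unfolded H_def]] by (simp add: F_def H_def)
  have L: "kspace v (r + 1) (L i) \<and> F \<subseteq> L i" if "i < ?q" for i
  proof
    have "\<not> L' i \<subseteq> graph_hyp c j v" using F'H L'[OF that] unfolding H_def by blast
    then show "kspace v (r + 1) (L i)"
      using kspace_proj_graph_hyp_section L'[OF that] unfolding L_def H_def by fastforce
    show "F \<subseteq> L i" using L'[OF that] unfolding F_def L_def by blast
  qed
  have "mset_set S = (\<Sum>i<?q. mset_set {P \<in> points v. P \<subseteq> L i \<and> \<not> P \<subseteq> F})"
    using mset_set_eq_sum_graph_hyp_sections[OF S M, of c j] unfolding F_def L_def H_def .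
  moreover have "size (mset_set S) = ?q ^ (r + 1)" using card_S by simp
  ultimately show ?thesis unfolding cylinder_def using F L by blast
qed

lemma gcc_Suc_imp_gcc:
  assumes "gcc TYPE('a::{field,finite}) (Suc v) (Suc r)"
  shows "gcc TYPE('a) v r"
  unfolding gcc_def
proof (intro allI impI, elim conjE)
  let ?q = "card (UNIV :: 'a set)"
  fix S :: "(nat \<Rightarrow> 'a) set set"
  assume S: "S \<subseteq> points v" "finite S" "card S = ?q ^ (r + 1)" "spanning v S" "divisible v r S"
  then have "S \<noteq> {}" by auto
  have "lift_set v S \<subseteq> points (Suc v)"
    using S(1) lift_point_in_points unfolding lift_set_def by blast
  moreover have "card (lift_set v S) = ?q ^ (Suc r + 1)"
    using card_lift_set[OF S(1,2)] S(3) by simp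
  moreover have "finite (lift_set v S)" using S(2) unfolding lift_set_def by simp
  ultimately have "cylinder (Suc v) (Suc r) (mset_set (lift_set v S))"
    using assms spanning_lift_set[OF S(1) \<open>S \<noteq> {}\<close> S(4)] divisible_lift_set[OF S(1,2,3,5)]
    unfolding gcc_def by blast
  then show "cylinder v r (mset_set S)" using cylinder_of_lift_set_cylinder[OF S(1,2)] by blast
qed

theorem mainTheorem6:
  fixes v r :: nat
  assumes "v \<ge> 1" and "r \<ge> 1"
    and "gcc TYPE('a::{field,finite}) (v + 1) (r + 1)"
  shows "gcc TYPE('a) v r"
  using gcc_Suc_imp_gcc assms(3) by simp

end
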